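(* For all integers $s\ge1$ and $k\ge2$, the polynomial $F_{s,k}(x)$ is divisible (in $\mathbb{Q}[x]$) by $\prod_{p=k}^{s}(x-p)$, where the empty product (when $k>s$) equals $1$.
   Context: For an integer $j\ge0$, $\binom{x}{j}=x(x-1)\cdots(x-j+1)/j!$ as a polynomial in $x$, and $\binom{x}{j}=0$ for $j<0$. For integers $s\ge1$, $k\ge1$, the Moser polynomial is $F_{s,k}(x)=\sum_{p=1}^{s}(-1)^{p-1}p^{k-1}\binom{x}{s-p}$. *)

theory Defs
  imports "HOL-Computational_Algebra.Polynomial"
begin

definition binom_poly :: "nat \<Rightarrow> rat poly" where
  "binom_poly j = smult (1 / fact j) (\<Prod>i<j. [:- of_nat i, 1:])"

text \<open>Moser polynomial F_{s,k}(x) = sum_{p=1}^s (-1)^(p-1) p^(k-1) binom(x, s-p).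
  Since p ranges over 1..s, s - p >= 0, so the convention binom(x,j)=0 for j<0 is never needed.\<close>
definition moser_poly :: "nat \<Rightarrow> nat \<Rightarrow> rat poly" where
  "moser_poly s k = (\<Sum>p=1..s. smult ((-1) ^ (p - 1) * of_nat p ^ (k - 1)) (binom_poly (s - p)))"

end

theory Submission
  imports Defs
begin

text \<open>
  Substituting \<open>j = s - p\<close>, the value of \<open>F s k\<close> at an integer \<open>m\<close> with \<open>k \<le> m \<le> s\<close> is,
  up to sign, \<open>\<Sum>j\<le>m. (-1)^j (m choose j) (s - j)^(k-1)\<close>: the remaining terms vanish because
  \<open>m choose j = 0\<close> for \<open>j > m\<close> and \<open>(s - s)^(k-1) = 0\<close>. This is an \<open>m\<close>-th finite difference
  of a polynomial of degree \<open>k - 1 < m\<close>, hence zero. So \<open>k, \<dots>, s\<close> are roots of \<open>F s k\<close>,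
  and the product of the corresponding distinct linear factors divides it.
\<close>

lemma poly_binom_poly_of_nat: "poly (binom_poly j) (of_nat m) = of_nat (m choose j)"
  by (simp add: binom_poly_def poly_prod binomial_gbinomial gbinomial_prod_rev atLeast0LessThan
      divide_inverse mult.commute)

lemma prod_linear_factors_dvd:
  fixes p :: "'a::idom poly"
  assumes "finite A" "\<And>a. a \<in> A \<Longrightarrow> poly p a = 0"
  shows "(\<Prod>a\<in>A. [:- a, 1:]) dvd p"
  using assms
proof (induction A arbitrary: p rule: finite_induct)
  case empty
  then show ?case by simp
next
  case (insert a A)
  then obtain q where q: "p = [:- a, 1:] * q"
    by (metis dvdE insertI1 poly_eq_0_iff_dvd)
  have "poly q b = 0" if "b \<in> A" for b
  proof -
    have "poly [:- a, 1:] b \<noteq> 0" using \<open>b \<in> A\<close> \<open>a \<notin> A\<close> by auto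
    moreover have "poly p b = 0" using insert.prems \<open>b \<in> A\<close> by blast
    ultimately show ?thesis using q by simp
  qed
  then have "(\<Prod>a\<in>A. [:- a, 1:]) dvd q" by (rule insert.IH)
  then have "[:- a, 1:] * (\<Prod>a\<in>A. [:- a, 1:]) dvd p"
    unfolding q by (rule mult_dvd_mono[OF dvd_refl])
  then show ?case using insert.hyps by simp
qed

lemma alternating_binomial_sum_Suc:
  fixes f :: "nat \<Rightarrow> 'a::comm_ring_1"
  shows "(\<Sum>j\<le>Suc m. (-1)^j * of_nat (Suc m choose j) * f j)
       = (\<Sum>j\<le>m. (-1)^j * of_nat (m choose j) * (f j - f (Suc j)))"
proof -
  have "(\<Sum>j\<le>m. (-1)^j * of_nat (m choose j) * f j)
      = (\<Sum>j\<le>Suc m. (-1)^j * of_nat (m choose j) * f j)"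
    by (simp add: binomial_eq_0)
  also have "\<dots> = f 0 + (\<Sum>j\<le>m. (-1)^Suc j * of_nat (m choose Suc j) * f (Suc j))"
    by (subst sum.atMost_Suc_shift) simp
  finally have shifted: "(\<Sum>j\<le>m. (-1)^j * of_nat (m choose j) * f j)
      = f 0 + (\<Sum>j\<le>m. (-1)^Suc j * of_nat (m choose Suc j) * f (Suc j))" .
  have "(\<Sum>j\<le>Suc m. (-1)^j * of_nat (Suc m choose j) * f j)
      = f 0 + (\<Sum>j\<le>m. (-1)^Suc j * of_nat (m choose Suc j) * f (Suc j))
            + (\<Sum>j\<le>m. (-1)^Suc j * of_nat (m choose j) * f (Suc j))"
    by (subst sum.atMost_Suc_shift) (simp add: sum.distrib[symmetric] algebra_simps)
  also have "\<dots> = (\<Sum>j\<le>m. (-1)^j * of_nat (m choose j) * (f j - f (Suc j)))"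
    by (simp only: shifted[symmetric]) (simp add: sum.distrib[symmetric] algebra_simps)
  finally show ?thesis .
qed

lemma alternating_binomial_sum_power_eq_0:
  fixes a c :: "'a::comm_ring_1"
  assumes "d < m"
  shows "(\<Sum>j\<le>m. (-1)^j * of_nat (m choose j) * (a + of_nat j * c)^d) = 0"
  using assms
proof (induction m arbitrary: d)
  case 0
  then show ?case by simp
next
  case (Suc m)
  have binomial: "(x + c)^d = (\<Sum>i\<le>d. of_nat (d choose i) * c^(d - i) * x^i)" for x
    unfolding binomial_ring by (simp add: ac_simps)
  have step: "(a + of_nat j * c)^d - (a + of_nat (Suc j) * c)^d
      = - (\<Sum>i<d. of_nat (d choose i) * c^(d - i) * (a + of_nat j * c)^i)" for j
  proof -
    have "(a + of_nat (Suc j) * c)^d = ((a + of_nat j * c) + c)^d"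
      by (simp add: algebra_simps)
    also have "\<dots> = (\<Sum>i\<le>d. of_nat (d choose i) * c^(d - i) * (a + of_nat j * c)^i)"
      by (rule binomial)
    also have "\<dots> = (\<Sum>i<d. of_nat (d choose i) * c^(d - i) * (a + of_nat j * c)^i)
                    + (a + of_nat j * c)^d"
      by (simp add: lessThan_Suc_atMost[symmetric])
    finally show ?thesis by simp
  qed
  have "(\<Sum>j\<le>Suc m. (-1)^j * of_nat (Suc m choose j) * (a + of_nat j * c)^d)
      = (\<Sum>j\<le>m. (-1)^j * of_nat (m choose j)
                  * - (\<Sum>i<d. of_nat (d choose i) * c^(d - i) * (a + of_nat j * c)^i))"
    by (simp only: alternating_binomial_sum_Suc step)
  also have "\<dots> = - (\<Sum>i<d. of_nat (d choose i) * c^(d - i)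
                    * (\<Sum>j\<le>m. (-1)^j * of_nat (m choose j) * (a + of_nat j * c)^i))"
    by (simp add: sum_distrib_left sum_negf sum.swap[of _ "{..<d}"] algebra_simps)
  also have "\<dots> = 0"
    using Suc.IH Suc.prems by simp
  finally show ?case .
qed

lemma minus_one_power_pred:
  assumes "1 \<le> p" "p \<le> s"
  shows "(-1::'a::comm_ring_1)^(p - 1) = (-1)^Suc s * (-1)^(s - p)"
proof -
  obtain q where "p = Suc q" using assms by (cases p) auto
  moreover obtain t where "s = p + t" using assms le_Suc_ex by blast
  ultimately show ?thesis
    by (simp add: power_add mult.assoc)
qed

lemma poly_moser_poly_of_nat:
  "poly (moser_poly s k) (of_nat m)
     = (-1)^Suc s * (\<Sum>j<s. (-1)^j * of_nat (m choose j) * (of_nat s - of_nat j)^(k - 1))"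
proof -
  have "poly (moser_poly s k) (of_nat m)
      = (\<Sum>p=1..s. (-1)^(p - 1) * of_nat p ^ (k - 1) * of_nat (m choose (s - p)))"
    by (simp add: moser_poly_def poly_sum poly_binom_poly_of_nat)
  also have "\<dots> = (-1)^Suc s * (\<Sum>p=1..s. (-1)^(s - p) * of_nat (m choose (s - p))
                                          * (of_nat s - of_nat (s - p))^(k - 1))"
  proof (unfold sum_distrib_left, rule sum.cong)
    fix p assume "p \<in> {1..s}"
    then have "1 \<le> p" "p \<le> s" by auto
    moreover from this have "(-1::rat)^(p - 1) = (-1)^Suc s * (-1)^(s - p)"
      by (rule minus_one_power_pred)
    ultimately show "(-1::rat)^(p - 1) * of_nat p ^ (k - 1) * of_nat (m choose (s - p))
        = (-1)^Suc s * ((-1)^(s - p) * of_nat (m choose (s - p)) * (of_nat s - of_nat (s - p))^(k - 1))"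
      by (simp add: algebra_simps)
  qed simp
  also have "(\<Sum>p=1..s. (-1)^(s - p) * of_nat (m choose (s - p)) * (of_nat s - of_nat (s - p))^(k - 1))
      = (\<Sum>j<s. (-1)^j * of_nat (m choose j) * (of_nat s - of_nat j :: rat)^(k - 1))"
    by (rule sum.reindex_bij_witness[of _ "\<lambda>j. s - j" "\<lambda>j. s - j"]) auto
  finally show ?thesis .
qed

lemma moser_poly_root:
  assumes "2 \<le> k" "k \<le> m" "m \<le> s"
  shows "poly (moser_poly s k) (of_nat m) = 0"
proof -
  define g where "g j = (-1)^j * of_nat (m choose j) * (of_nat s - of_nat j :: rat)^(k - 1)" for j
  have "(\<Sum>j<s. g j) = (\<Sum>j\<le>s. g j)"
    using assms by (simp add: lessThan_Suc_atMost[symmetric] g_def)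
  also have "\<dots> = (\<Sum>j\<le>m. g j)"
    by (rule sum.mono_neutral_right) (use assms in \<open>auto simp: g_def\<close>)
  also have "\<dots> = 0"
    using alternating_binomial_sum_power_eq_0[of "k - 1" m "of_nat s" "-1 :: rat"] assms
    by (simp add: g_def)
  finally show ?thesis
    by (simp add: poly_moser_poly_of_nat g_def)
qed

theorem mainTheorem18:
  fixes s k :: nat
  assumes "s \<ge> 1" and "k \<ge> 2"
  shows "(\<Prod>p=k..s. [:- of_nat p, 1:]) dvd moser_poly s k"
proof -
  have "(\<Prod>a\<in>of_nat ` {k..s}. [:- a, 1:]) dvd moser_poly s k"
    by (rule prod_linear_factors_dvd) (use assms moser_poly_root in auto)
  then show ?thesis
    by (simp add: prod.reindex)
qed

end
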